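(* The category $\mathcal B$ is equivalent to the 2-groupoid $\mathcal K_G$ of $G=\mathbb Z$. The category $\mathcal B_n$ is equivalent to $\mathcal K_G$ for $G=\mathbb Z/n\mathbb Z$.
   Context: For a group $G$, the 2-groupoid $\mathcal K_G$ is the monoidal category whose objects are the elements of $G$, with monoidal product given by multiplication, and whose only morphisms are identity morphisms. $\mathcal B$ is the (non-linear) strict monoidal category whose objects are generated by two objects $\Omega^+,\Omega^-$ (drawn as upward and downward oriented strands), and whose morphisms are planar diagrams generated by the four oriented cups and caps (units/counits of adjunctions in both directions between $\Omega^+$ and $\Omega^-$), modulo the relations: the zigzag (isotopy) relations for these adjunctions; each closed oriented circle (of either orientation) equals the empty diagram; and the identity of $\Omega^+\otimes\Omega^-$ (and of $\Omega^-\otimes\Omega^+$) equals the composite of the appropriate cap followed by the appropriate cup. Only diagrams (not linear combinations) are morphisms. For $n\ge2$, $\mathcal B_n$ is obtained from $\mathcal B$ by adding two further generating morphisms, black $n$-valent vertices $\Omega^+\otimes\cdots\otimes\Omega^+\ (n\text{ factors})\to\mathbb 1$ and $\mathbb 1\to(\Omega^+)^{\otimes n}$, with relations: these vertices are cyclic and invariant under rotation (and similarly for the orientation-reversed versions); the composite of the two vertices in either order equals the identity (of $\mathbb 1$, respectively of $(\Omega^+)^{\otimes n}$). *)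

theory Defs
  imports "HOL-Algebra.Elementary_Groups"
begin

text \<open>Up = Omega+, Dn = Omega-. Objects of B and B_n are words in Up/Dn
  (the tensor product is concatenation, the unit is the empty word).\<close>

datatype orient = Up | Dn

text \<open>Generating morphisms:
  CupL : 1 -> Up Dn,   CapL : Dn Up -> 1   (one adjunction),
  CupR : 1 -> Dn Up,   CapR : Up Dn -> 1   (the other adjunction),
  VOut n : Up^n -> 1,  VIn n : 1 -> Up^n   (black n-valent vertices).\<close>

datatype gen = CupL | CapL | CupR | CapR | VOut nat | VIn nat

fun gdom :: "gen \<Rightarrow> orient list" where
  "gdom CupL = []"
| "gdom CapL = [Dn, Up]"
| "gdom CupR = []"
| "gdom CapR = [Up, Dn]"
| "gdom (VOut n) = replicate n Up"
| "gdom (VIn n) = []"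

fun gcod :: "gen \<Rightarrow> orient list" where
  "gcod CupL = [Up, Dn]"
| "gcod CapL = []"
| "gcod CupR = [Dn, Up]"
| "gcod CapR = []"
| "gcod (VOut n) = []"
| "gcod (VIn n) = replicate n Up"

text \<open>Formal diagram expressions; Comp f g means "first f, then g".\<close>

datatype dgm = Idt "orient list" | Gen gen | Comp dgm dgm | Tens dgm dgm

fun ddom :: "dgm \<Rightarrow> orient list" where
  "ddom (Idt a) = a"
| "ddom (Gen g) = gdom g"
| "ddom (Comp f g) = ddom f"
| "ddom (Tens f g) = ddom f @ ddom g"

fun dcod :: "dgm \<Rightarrow> orient list" where
  "dcod (Idt a) = a"
| "dcod (Gen g) = gcod g"
| "dcod (Comp f g) = dcod g"
| "dcod (Tens f g) = dcod f @ dcod g"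

fun valid :: "gen set \<Rightarrow> dgm \<Rightarrow> bool" where
  "valid Gs (Idt a) = True"
| "valid Gs (Gen g) = (g \<in> Gs)"
| "valid Gs (Comp f g) = (valid Gs f \<and> valid Gs g \<and> dcod f = ddom g)"
| "valid Gs (Tens f g) = (valid Gs f \<and> valid Gs g)"

text \<open>Morphisms
  u -> v of the presented category are the eqv-classes of valid expressions
  with domain u and codomain v.\<close>

inductive eqv :: "gen set \<Rightarrow> (dgm \<times> dgm) set \<Rightarrow> dgm \<Rightarrow> dgm \<Rightarrow> bool"
  for Gs :: "gen set" and Rs :: "(dgm \<times> dgm) set" where
  refl: "valid Gs f \<Longrightarrow> eqv Gs Rs f f"
| sym: "eqv Gs Rs f g \<Longrightarrow> eqv Gs Rs g f"
| trans: "eqv Gs Rs f g \<Longrightarrow> eqv Gs Rs g h \<Longrightarrow> eqv Gs Rs f h"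
| comp_cong: "eqv Gs Rs f f' \<Longrightarrow> eqv Gs Rs g g' \<Longrightarrow> dcod f = ddom g \<Longrightarrow>
     eqv Gs Rs (Comp f g) (Comp f' g')"
| tens_cong: "eqv Gs Rs f f' \<Longrightarrow> eqv Gs Rs g g' \<Longrightarrow> eqv Gs Rs (Tens f g) (Tens f' g')"
| comp_assoc: "valid Gs f \<Longrightarrow> valid Gs g \<Longrightarrow> valid Gs h \<Longrightarrow> dcod f = ddom g \<Longrightarrow>
     dcod g = ddom h \<Longrightarrow> eqv Gs Rs (Comp (Comp f g) h) (Comp f (Comp g h))"
| id_left: "valid Gs f \<Longrightarrow> eqv Gs Rs (Comp (Idt (ddom f)) f) f"
| id_right: "valid Gs f \<Longrightarrow> eqv Gs Rs (Comp f (Idt (dcod f))) f"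
| tens_assoc: "valid Gs f \<Longrightarrow> valid Gs g \<Longrightarrow> valid Gs h \<Longrightarrow>
     eqv Gs Rs (Tens (Tens f g) h) (Tens f (Tens g h))"
| unit_left: "valid Gs f \<Longrightarrow> eqv Gs Rs (Tens (Idt []) f) f"
| unit_right: "valid Gs f \<Longrightarrow> eqv Gs Rs (Tens f (Idt [])) f"
| tens_id: "eqv Gs Rs (Tens (Idt a) (Idt b)) (Idt (a @ b))"
| interchange: "valid Gs f \<Longrightarrow> valid Gs f' \<Longrightarrow> valid Gs g \<Longrightarrow> valid Gs g' \<Longrightarrow>
     dcod f = ddom f' \<Longrightarrow> dcod g = ddom g' \<Longrightarrow>
     eqv Gs Rs (Comp (Tens f g) (Tens f' g')) (Tens (Comp f f') (Comp g g'))"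
| rel: "(s, t) \<in> Rs \<Longrightarrow> eqv Gs Rs s t"

definition B_gens :: "gen set" where
  "B_gens = {CupL, CapL, CupR, CapR}"

definition B_rels :: "(dgm \<times> dgm) set" where
  "B_rels =
    { \<comment> \<open>zigzag relations for the adjunction (CupL, CapL)\<close>
      (Comp (Tens (Gen CupL) (Idt [Up])) (Tens (Idt [Up]) (Gen CapL)), Idt [Up]),
      (Comp (Tens (Idt [Dn]) (Gen CupL)) (Tens (Gen CapL) (Idt [Dn])), Idt [Dn]),
      \<comment> \<open>zigzag relations for the adjunction (CupR, CapR)\<close>
      (Comp (Tens (Gen CupR) (Idt [Dn])) (Tens (Idt [Dn]) (Gen CapR)), Idt [Dn]),
      (Comp (Tens (Idt [Up]) (Gen CupR)) (Tens (Gen CapR) (Idt [Up])), Idt [Up]),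
      \<comment> \<open>closed circles of both orientations equal the empty diagram\<close>
      (Comp (Gen CupL) (Gen CapR), Idt []),
      (Comp (Gen CupR) (Gen CapL), Idt []),
      \<comment> \<open>identity of Up Dn / Dn Up equals cap followed by cup\<close>
      (Idt [Up, Dn], Comp (Gen CapR) (Gen CupL)),
      (Idt [Dn, Up], Comp (Gen CapL) (Gen CupR)) }"

definition Bn_gens :: "nat \<Rightarrow> gen set" where
  "Bn_gens n = B_gens \<union> {VOut n, VIn n}"

definition Bn_rels :: "nat \<Rightarrow> (dgm \<times> dgm) set" where
  "Bn_rels n = B_rels \<union>
    { \<comment> \<open>cyclicity: rotating the vertex Up^n -> 1 by one strand leaves it unchanged\<close>
      (Comp (Comp (Tens (Gen CupR) (Idt (replicate n Up)))
                  (Tens (Tens (Idt [Dn]) (Gen (VOut n))) (Idt [Up])))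
            (Gen CapL),
       Gen (VOut n)),
      \<comment> \<open>cyclicity: rotating the vertex 1 -> Up^n by one strand leaves it unchanged\<close>
      (Comp (Comp (Gen CupR) (Tens (Tens (Idt [Dn]) (Gen (VIn n))) (Idt [Up])))
            (Tens (Gen CapL) (Idt (replicate n Up))),
       Gen (VIn n)),
      \<comment> \<open>the two composites of the vertices are identities\<close>
      (Comp (Gen (VIn n)) (Gen (VOut n)), Idt []),
      (Comp (Gen (VOut n)) (Gen (VIn n)), Idt (replicate n Up)) }"

text \<open>K_G: objects = carrier G, tensor = group multiplication, only identity
  morphisms.  Since all morphisms of K_G are identities, a monoidal functor
  F from the presented category to K_G is a monoid homomorphism on objects
  (the structure isomorphisms F(u)F(v) -> F(uv), 1 -> F(1) are identities)
  such that every morphism u -> v has F u = F v.  It is an equivalence iff it is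
  full (F u = F v implies Hom(u,v) nonempty), faithful (any two parallel
  morphisms are equal) and essentially surjective (isomorphisms in K_G are
  identities, so: surjective on objects).\<close>

definition monoidal_equiv_K ::
  "gen set \<Rightarrow> (dgm \<times> dgm) set \<Rightarrow> ('g, 'b) monoid_scheme \<Rightarrow> bool" where
  "monoidal_equiv_K Gs Rs G \<longleftrightarrow>
    (\<exists>F :: orient list \<Rightarrow> 'g.
        (\<forall>u. F u \<in> carrier G)
      \<and> F [] = \<one>\<^bsub>G\<^esub>
      \<and> (\<forall>u v. F (u @ v) = F u \<otimes>\<^bsub>G\<^esub> F v)
      \<and> (\<forall>t. valid Gs t \<longrightarrow> F (ddom t) = F (dcod t))
      \<and> (\<forall>u v. F u = F v \<longrightarrow> (\<exists>t. valid Gs t \<and> ddom t = u \<and> dcod t = v))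
      \<and> (\<forall>s t. valid Gs s \<and> valid Gs t \<and> ddom s = ddom t \<and> dcod s = dcod t
                \<longrightarrow> eqv Gs Rs s t)
      \<and> (\<forall>g \<in> carrier G. \<exists>u. F u = g))"

end

(*
  Every word u of strands is connected to a normal form by an invertible diagram norm u that
  absorbs the strands of u one at a time: an extra strand either lengthens the normal word or
  is removed by a cap (in B_n also by a vertex).  The normal forms are Up^k and Dn^k, k in Z,
  for B and Up^k, 0 <= k < n, for B_n; the index reached by u is its image in K_G.
  Naturality of norm is checked by hand for the cups and the outgoing vertex (caps and the
  incoming vertex are their inverses) and extends to all diagrams by structural induction.
  Hence every diagram t : u -> v equals norm u followed by the inverse of norm v, which gives
  faithfulness; fullness and essential surjectivity are then immediate.
*)

theory Submission
  imports Defs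
begin

declare eqv.trans [trans]

definition whisker :: "orient list \<Rightarrow> dgm \<Rightarrow> orient list \<Rightarrow> dgm" where
  "whisker a f b = Tens (Tens (Idt a) f) (Idt b)"

lemma whisker_simps [simp]:
  "valid Gs (whisker a f b) = valid Gs f"
  "ddom (whisker a f b) = a @ ddom f @ b"
  "dcod (whisker a f b) = a @ dcod f @ b"
  by (auto simp: whisker_def)

locale presentation =
  fixes Gs :: "gen set" and Rs :: "(dgm \<times> dgm) set"
  assumes rels_typed:
    "(s, t) \<in> Rs \<Longrightarrow> valid Gs s \<and> valid Gs t \<and> ddom s = ddom t \<and> dcod s = dcod t"
begin

abbreviation eqv_rel (infix "\<approx>" 50) where "f \<approx> g \<equiv> eqv Gs Rs f g"

lemma eqv_typed: "f \<approx> g \<Longrightarrow> valid Gs f \<and> valid Gs g \<and> ddom f = ddom g \<and> dcod f = dcod g"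
  by (induction rule: eqv.induct) (auto dest: rels_typed)

lemma comp_cong_left: "f \<approx> f' \<Longrightarrow> valid Gs g \<Longrightarrow> dcod f = ddom g \<Longrightarrow> Comp f g \<approx> Comp f' g"
  by (rule eqv.comp_cong) (auto intro: eqv.refl)

lemma comp_cong_right: "g \<approx> g' \<Longrightarrow> valid Gs f \<Longrightarrow> dcod f = ddom g \<Longrightarrow> Comp f g \<approx> Comp f g'"
  by (rule eqv.comp_cong) (auto intro: eqv.refl)

lemma tens_cong_left: "f \<approx> f' \<Longrightarrow> valid Gs g \<Longrightarrow> Tens f g \<approx> Tens f' g"
  by (rule eqv.tens_cong) (auto intro: eqv.refl)

lemma tens_cong_right: "g \<approx> g' \<Longrightarrow> valid Gs f \<Longrightarrow> Tens f g \<approx> Tens f g'"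
  by (rule eqv.tens_cong) (auto intro: eqv.refl)

lemma comp_assoc_rev: "valid Gs f \<Longrightarrow> valid Gs g \<Longrightarrow> valid Gs h \<Longrightarrow> dcod f = ddom g \<Longrightarrow>
    dcod g = ddom h \<Longrightarrow> Comp f (Comp g h) \<approx> Comp (Comp f g) h"
  by (rule eqv.sym, rule eqv.comp_assoc)

lemma tens_assoc_rev:
  "valid Gs f \<Longrightarrow> valid Gs g \<Longrightarrow> valid Gs h \<Longrightarrow> Tens f (Tens g h) \<approx> Tens (Tens f g) h"
  by (rule eqv.sym, rule eqv.tens_assoc)

lemma comp_Idt_left: "valid Gs f \<Longrightarrow> a = ddom f \<Longrightarrow> Comp (Idt a) f \<approx> f"
  using eqv.id_left by blast

lemma comp_Idt_right: "valid Gs f \<Longrightarrow> a = dcod f \<Longrightarrow> Comp f (Idt a) \<approx> f"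
  using eqv.id_right by blast

lemma whisker_cong: "f \<approx> g \<Longrightarrow> whisker a f b \<approx> whisker a g b"
  unfolding whisker_def by (intro eqv.tens_cong eqv.refl) auto

lemma whisker_Nil: "valid Gs f \<Longrightarrow> whisker [] f [] \<approx> f"
  unfolding whisker_def by (rule eqv.trans[OF eqv.unit_right eqv.unit_left]) auto

lemma whisker_Idt: "whisker a (Idt c) b \<approx> Idt (a @ c @ b)"
proof -
  have "whisker a (Idt c) b \<approx> Tens (Idt (a @ c)) (Idt b)"
    unfolding whisker_def by (rule tens_cong_left[OF eqv.tens_id]) simp
  also have "\<dots> \<approx> Idt (a @ c @ b)" using eqv.tens_id[of Gs Rs "a @ c" b] by simp
  finally show ?thesis .
qed

lemma whisker_whisker:
  assumes "valid Gs f" "a' = a @ c" "b' = d @ b"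
  shows "whisker a (whisker c f d) b \<approx> whisker a' f b'"
proof -
  have "whisker a (whisker c f d) b = Tens (Tens (Idt a) (Tens (Tens (Idt c) f) (Idt d))) (Idt b)"
    by (simp add: whisker_def)
  also have "\<dots> \<approx> Tens (Tens (Tens (Idt a) (Tens (Idt c) f)) (Idt d)) (Idt b)"
    by (intro tens_cong_left tens_assoc_rev) (use assms in auto)
  also have "\<dots> \<approx> Tens (Tens (Tens (Tens (Idt a) (Idt c)) f) (Idt d)) (Idt b)"
    by (intro tens_cong_left tens_assoc_rev) (use assms in auto)
  also have "\<dots> \<approx> Tens (Tens (Tens (Idt (a @ c)) f) (Idt d)) (Idt b)"
    by (intro tens_cong_left eqv.tens_id) (use assms in auto)
  also have "\<dots> \<approx> Tens (Tens (Idt (a @ c)) f) (Tens (Idt d) (Idt b))"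
    by (intro eqv.tens_assoc) (use assms in auto)
  also have "\<dots> \<approx> Tens (Tens (Idt (a @ c)) f) (Idt (d @ b))"
    by (intro tens_cong_right eqv.tens_id) (use assms in auto)
  finally show ?thesis using assms by (simp add: whisker_def)
qed

lemma whisker_whisker_rev:
  "valid Gs f \<Longrightarrow> a' = a @ c \<Longrightarrow> b' = d @ b \<Longrightarrow> whisker a' f b' \<approx> whisker a (whisker c f d) b"
  using whisker_whisker eqv.sym by blast

lemma whisker_Comp:
  assumes "valid Gs f" "valid Gs g" "dcod f = ddom g"
  shows "whisker a (Comp f g) b \<approx> Comp (whisker a f b) (whisker a g b)"
proof -
  have "whisker a (Comp f g) b
      \<approx> Tens (Tens (Comp (Idt a) (Idt a)) (Comp f g)) (Comp (Idt b) (Idt b))"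
    unfolding whisker_def
    by (intro eqv.tens_cong eqv.sym[OF comp_Idt_left] eqv.refl) (use assms in auto)
  also have "\<dots> \<approx> Tens (Comp (Tens (Idt a) f) (Tens (Idt a) g)) (Comp (Idt b) (Idt b))"
    by (rule tens_cong_left, rule eqv.sym, rule eqv.interchange) (use assms in auto)
  also have "\<dots> \<approx> Comp (whisker a f b) (whisker a g b)"
    unfolding whisker_def by (rule eqv.sym, rule eqv.interchange) (use assms in auto)
  finally show ?thesis .
qed

lemma Tens_Idt_left: "valid Gs f \<Longrightarrow> Tens (Idt a) f \<approx> whisker a f []"
  unfolding whisker_def by (rule eqv.sym, rule eqv.unit_right) auto

lemma Tens_Idt_right: "valid Gs f \<Longrightarrow> Tens f (Idt b) \<approx> whisker [] f b"
  unfolding whisker_def by (rule eqv.sym, rule tens_cong_left[OF eqv.unit_left]) auto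

lemma Tens_eq_Comp:
  assumes "valid Gs f" "valid Gs g"
  shows "Tens f g \<approx> Comp (whisker [] f (ddom g)) (whisker (dcod f) g [])"
proof -
  have "Tens f g \<approx> Tens (Comp f (Idt (dcod f))) (Comp (Idt (ddom g)) g)"
    using assms by (intro eqv.tens_cong eqv.sym[OF comp_Idt_left] eqv.sym[OF comp_Idt_right]) auto
  also have "\<dots> \<approx> Comp (Tens f (Idt (ddom g))) (Tens (Idt (dcod f)) g)"
    by (rule eqv.sym, rule eqv.interchange) (use assms in auto)
  also have "\<dots> \<approx> Comp (whisker [] f (ddom g)) (whisker (dcod f) g [])"
    by (intro eqv.comp_cong Tens_Idt_left Tens_Idt_right) (use assms in auto)
  finally show ?thesis .
qed

lemma Tens_eq_Comp':
  assumes "valid Gs f" "valid Gs g"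
  shows "Tens f g \<approx> Comp (whisker (ddom f) g []) (whisker [] f (dcod g))"
proof -
  have "Tens f g \<approx> Tens (Comp (Idt (ddom f)) f) (Comp g (Idt (dcod g)))"
    using assms by (intro eqv.tens_cong eqv.sym[OF comp_Idt_left] eqv.sym[OF comp_Idt_right]) auto
  also have "\<dots> \<approx> Comp (Tens (Idt (ddom f)) g) (Tens f (Idt (dcod g)))"
    by (rule eqv.sym, rule eqv.interchange) (use assms in auto)
  also have "\<dots> \<approx> Comp (whisker (ddom f) g []) (whisker [] f (dcod g))"
    by (intro eqv.comp_cong Tens_Idt_left Tens_Idt_right) (use assms in auto)
  finally show ?thesis .
qed

lemma whisker_Tens:
  assumes "valid Gs f" "valid Gs g"
  shows "whisker a (Tens f g) b \<approx> Comp (whisker a f (ddom g @ b)) (whisker (a @ dcod f) g b)"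
proof -
  have "whisker a (Tens f g) b \<approx> whisker a (Comp (whisker [] f (ddom g)) (whisker (dcod f) g [])) b"
    by (intro whisker_cong Tens_eq_Comp assms)
  also have "\<dots> \<approx> Comp (whisker a (whisker [] f (ddom g)) b) (whisker a (whisker (dcod f) g []) b)"
    by (intro whisker_Comp) (use assms in auto)
  also have "\<dots> \<approx> Comp (whisker a f (ddom g @ b)) (whisker (a @ dcod f) g b)"
    by (intro eqv.comp_cong whisker_whisker) (use assms in auto)
  finally show ?thesis .
qed

lemma whisker_Tens':
  assumes "valid Gs f" "valid Gs g"
  shows "whisker a (Tens f g) b \<approx> Comp (whisker (a @ ddom f) g b) (whisker a f (dcod g @ b))"
proof -
  have "whisker a (Tens f g) b \<approx> whisker a (Comp (whisker (ddom f) g []) (whisker [] f (dcod g))) b"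
    by (intro whisker_cong Tens_eq_Comp' assms)
  also have "\<dots> \<approx> Comp (whisker a (whisker (ddom f) g []) b) (whisker a (whisker [] f (dcod g)) b)"
    by (intro whisker_Comp) (use assms in auto)
  also have "\<dots> \<approx> Comp (whisker (a @ ddom f) g b) (whisker a f (dcod g @ b))"
    by (intro eqv.comp_cong whisker_whisker) (use assms in auto)
  finally show ?thesis .
qed

lemma whisker_interchange:
  "valid Gs f \<Longrightarrow> valid Gs g \<Longrightarrow>
   Comp (whisker a f (ddom g @ b)) (whisker (a @ dcod f) g b)
     \<approx> Comp (whisker (a @ ddom f) g b) (whisker a f (dcod g @ b))"
  using eqv.trans[OF eqv.sym[OF whisker_Tens] whisker_Tens'] by blast

lemma whisker_interchange_mid:
  assumes "valid Gs f" "valid Gs g"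
  shows "Comp (whisker a f (c @ ddom g @ b)) (whisker (a @ dcod f @ c) g b)
     \<approx> Comp (whisker (a @ ddom f @ c) g b) (whisker a f (c @ dcod g @ b))"
proof -
  have "Comp (whisker a f (c @ ddom g @ b)) (whisker (a @ dcod f @ c) g b)
      \<approx> Comp (whisker a f (c @ ddom g @ b)) (whisker (a @ dcod f) (whisker c g []) b)"
    by (intro comp_cong_right whisker_whisker_rev) (use assms in auto)
  also have "\<dots> \<approx> Comp (whisker (a @ ddom f) (whisker c g []) b) (whisker a f (c @ dcod g @ b))"
    using whisker_interchange[of f "whisker c g []" a b] assms by simp
  also have "\<dots> \<approx> Comp (whisker (a @ ddom f @ c) g b) (whisker a f (c @ dcod g @ b))"
    by (intro comp_cong_left whisker_whisker) (use assms in auto)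
  finally show ?thesis .
qed

lemma whisker_inverse:
  assumes inv: "Comp f g \<approx> Idt c"
  shows "Comp (whisker a f b) (whisker a g b) \<approx> Idt (a @ c @ b)"
proof -
  have "valid Gs f" "valid Gs g" "dcod f = ddom g" using eqv_typed[OF inv] by auto
  then have "Comp (whisker a f b) (whisker a g b) \<approx> whisker a (Comp f g) b"
    by (intro eqv.sym[OF whisker_Comp])
  also have "\<dots> \<approx> whisker a (Idt c) b" by (rule whisker_cong[OF inv])
  also have "\<dots> \<approx> Idt (a @ c @ b)" by (rule whisker_Idt)
  finally show ?thesis .
qed

end

fun norm_dgm ::
  "('z \<Rightarrow> orient list) \<Rightarrow> ('z \<Rightarrow> orient \<Rightarrow> 'z) \<Rightarrow> ('z \<Rightarrow> orient \<Rightarrow> dgm) \<Rightarrow> 'z \<Rightarrow> orient list \<Rightarrow> dgm"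
where
  "norm_dgm word step move z [] = Idt (word z)"
| "norm_dgm word step move z (x # b) =
     Comp (whisker [] (move z x) b) (norm_dgm word step move (step z x) b)"

fun denorm_dgm ::
  "('z \<Rightarrow> orient list) \<Rightarrow> ('z \<Rightarrow> orient \<Rightarrow> 'z) \<Rightarrow> ('z \<Rightarrow> orient \<Rightarrow> dgm) \<Rightarrow> 'z \<Rightarrow> orient list \<Rightarrow> dgm"
where
  "denorm_dgm word step move_back z [] = Idt (word z)"
| "denorm_dgm word step move_back z (x # b) =
     Comp (denorm_dgm word step move_back (step z x) b) (whisker [] (move_back z x) b)"

locale normalisation = presentation +
  fixes word :: "'z \<Rightarrow> orient list" and step :: "'z \<Rightarrow> orient \<Rightarrow> 'z"
    and is_state :: "'z \<Rightarrow> bool" and z0 :: 'z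
    and move move_back :: "'z \<Rightarrow> orient \<Rightarrow> dgm"
  assumes is_state_z0 [simp]: "is_state z0"
    and word_z0 [simp]: "word z0 = []"
    and is_state_step [simp]: "is_state z \<Longrightarrow> is_state (step z x)"
    and word_inj: "is_state z \<Longrightarrow> is_state z' \<Longrightarrow> word z = word z' \<Longrightarrow> z = z'"
    and move_typed: "is_state z \<Longrightarrow>
      valid Gs (move z x) \<and> ddom (move z x) = word z @ [x] \<and> dcod (move z x) = word (step z x)"
    and move_back_typed: "is_state z \<Longrightarrow>
      valid Gs (move_back z x) \<and> ddom (move_back z x) = word (step z x) \<and>
      dcod (move_back z x) = word z @ [x]"
    and move_inverse: "is_state z \<Longrightarrow> Comp (move z x) (move_back z x) \<approx> Idt (word z @ [x])"
begin

abbreviation "norm \<equiv> norm_dgm word step move"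
abbreviation "denorm \<equiv> denorm_dgm word step move_back"

lemma move_simps [simp]:
  assumes "is_state z"
  shows "valid Gs (move z x)" "ddom (move z x) = word z @ [x]" "dcod (move z x) = word (step z x)"
  using move_typed[OF assms] by auto

lemma move_back_simps [simp]:
  assumes "is_state z"
  shows "valid Gs (move_back z x)" "ddom (move_back z x) = word (step z x)"
    "dcod (move_back z x) = word z @ [x]"
  using move_back_typed[OF assms] by auto

lemma is_state_foldl [simp]: "is_state z \<Longrightarrow> is_state (foldl step z b)"
  by (induction b arbitrary: z) auto

lemma norm_typed [simp]:
  assumes "is_state z"
  shows "valid Gs (norm z b)" "ddom (norm z b) = word z @ b"
    "dcod (norm z b) = word (foldl step z b)"
  using assms by (induction b arbitrary: z) auto

lemma denorm_typed [simp]: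
  assumes "is_state z"
  shows "valid Gs (denorm z b)" "dcod (denorm z b) = word z @ b"
    "ddom (denorm z b) = word (foldl step z b)"
  using assms by (induction b arbitrary: z) auto

lemma norm_denorm: "is_state z \<Longrightarrow> Comp (norm z b) (denorm z b) \<approx> Idt (word z @ b)"
proof (induction b arbitrary: z)
  case Nil
  then show ?case by (simp add: comp_Idt_left)
next
  case (Cons x b)
  let ?z = "step z x" and ?r = "move z x" and ?r' = "move_back z x"
  have "Comp (norm z (x # b)) (denorm z (x # b))
      = Comp (Comp (whisker [] ?r b) (norm ?z b)) (Comp (denorm ?z b) (whisker [] ?r' b))"
    by simp
  also have "\<dots> \<approx> Comp (whisker [] ?r b) (Comp (norm ?z b) (Comp (denorm ?z b) (whisker [] ?r' b)))"
    by (rule eqv.comp_assoc) (use Cons.prems in auto)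
  also have "\<dots> \<approx> Comp (whisker [] ?r b) (Comp (Comp (norm ?z b) (denorm ?z b)) (whisker [] ?r' b))"
    by (intro comp_cong_right comp_assoc_rev) (use Cons.prems in auto)
  also have "\<dots> \<approx> Comp (whisker [] ?r b) (Comp (Idt (word ?z @ b)) (whisker [] ?r' b))"
    by (intro comp_cong_right comp_cong_left Cons.IH) (use Cons.prems in auto)
  also have "\<dots> \<approx> Comp (whisker [] ?r b) (whisker [] ?r' b)"
    by (intro comp_cong_right comp_Idt_left) (use Cons.prems in auto)
  also have "\<dots> \<approx> Idt (word z @ x # b)"
    using whisker_inverse[OF move_inverse[OF Cons.prems], where a = "[]" and b = b] by simp
  finally show ?case .
qed

lemma norm_append:
  "is_state z \<Longrightarrow> norm z (w @ b) \<approx> Comp (whisker [] (norm z w) b) (norm (foldl step z w) b)"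
proof (induction w arbitrary: z)
  case Nil
  have "norm z b \<approx> Comp (Idt (word z @ b)) (norm z b)"
    by (rule eqv.sym, rule comp_Idt_left) (use Nil in auto)
  also have "\<dots> \<approx> Comp (whisker [] (norm z []) b) (norm z b)"
    by (intro comp_cong_left) (use Nil eqv.sym[OF whisker_Idt[of "[]" "word z" b]] in auto)
  finally show ?case by simp
next
  case (Cons x w)
  let ?z = "step z x" and ?r = "move z x"
  have "norm z ((x # w) @ b) = Comp (whisker [] ?r (w @ b)) (norm ?z (w @ b))" by simp
  also have "\<dots> \<approx>
      Comp (whisker [] ?r (w @ b)) (Comp (whisker [] (norm ?z w) b) (norm (foldl step ?z w) b))"
    by (intro comp_cong_right Cons.IH) (use Cons.prems in auto)
  also have "\<dots> \<approx>
      Comp (Comp (whisker [] ?r (w @ b)) (whisker [] (norm ?z w) b)) (norm (foldl step ?z w) b)"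
    by (intro comp_assoc_rev) (use Cons.prems in auto)
  also have "\<dots> \<approx>
      Comp (Comp (whisker [] (whisker [] ?r w) b) (whisker [] (norm ?z w) b))
           (norm (foldl step ?z w) b)"
    by (intro comp_cong_left eqv.comp_cong whisker_whisker_rev eqv.refl) (use Cons.prems in auto)
  also have "\<dots> \<approx>
      Comp (whisker [] (Comp (whisker [] ?r w) (norm ?z w)) b) (norm (foldl step ?z w) b)"
    by (intro comp_cong_left eqv.sym[OF whisker_Comp]) (use Cons.prems in auto)
  finally show ?case by simp
qed

lemma norm_pair:
  assumes "is_state z"
  shows "norm z [x, y] \<approx> Comp (whisker [] (move z x) [y]) (move (step z x) y)"
proof -
  have "norm z [x, y] = Comp (whisker [] (move z x) [y])
      (Comp (whisker [] (move (step z x) y) []) (Idt (word (step (step z x) y))))"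
    by simp
  also have "\<dots> \<approx> Comp (whisker [] (move z x) [y]) (whisker [] (move (step z x) y) [])"
    by (intro comp_cong_right comp_Idt_right) (use assms in auto)
  also have "\<dots> \<approx> Comp (whisker [] (move z x) [y]) (move (step z x) y)"
    by (intro comp_cong_right whisker_Nil) (use assms in auto)
  finally show ?thesis .
qed

lemma natural_if_inverse:
  assumes z: "is_state z" and g: "g \<in> Gs" "g' \<in> Gs" "gdom g' = gcod g" "gcod g' = gdom g"
    and inv: "Comp (Gen g') (Gen g) \<approx> Idt (gcod g)"
    and natural: "Comp (whisker (word z) (Gen g) []) (norm z (gcod g)) \<approx> norm z (gdom g)"
  shows "Comp (whisker (word z) (Gen g') []) (norm z (gcod g')) \<approx> norm z (gdom g')"
proof -
  let ?W = "word z"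
  have "Comp (whisker ?W (Gen g') []) (norm z (gdom g))
      \<approx> Comp (whisker ?W (Gen g') []) (Comp (whisker ?W (Gen g) []) (norm z (gcod g)))"
    by (intro comp_cong_right eqv.sym[OF natural]) (use z g in auto)
  also have "\<dots> \<approx> Comp (Comp (whisker ?W (Gen g') []) (whisker ?W (Gen g) [])) (norm z (gcod g))"
    by (intro comp_assoc_rev) (use z g in auto)
  also have "\<dots> \<approx> Comp (Idt (?W @ gcod g)) (norm z (gcod g))"
    by (intro comp_cong_left) (use z g whisker_inverse[OF inv, of ?W "[]"] in auto)
  also have "\<dots> \<approx> norm z (gcod g)" by (intro comp_Idt_left) (use z g in auto)
  finally show ?thesis using g by simp
qed

end

locale natural_normalisation = normalisation +
  assumes natural_Gen: "is_state z \<Longrightarrow> g \<in> Gs \<Longrightarrow>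
    Comp (whisker (word z) (Gen g) []) (norm_dgm word step move z (gcod g))
      \<approx> norm_dgm word step move z (gdom g)"
begin

lemma norm_natural_Gen_Nil:
  assumes g: "g \<in> Gs"
  shows "Comp (whisker w (Gen g) []) (norm z0 (w @ gcod g)) \<approx> norm z0 (w @ gdom g)"
proof -
  let ?z = "foldl step z0 w" and ?a = "gdom g" and ?b = "gcod g"
  have "Comp (whisker w (Gen g) []) (norm z0 (w @ ?b))
      \<approx> Comp (whisker w (Gen g) []) (Comp (whisker [] (norm z0 w) ?b) (norm ?z ?b))"
    by (intro comp_cong_right norm_append) (use g in auto)
  also have "\<dots> \<approx> Comp (Comp (whisker w (Gen g) []) (whisker [] (norm z0 w) ?b)) (norm ?z ?b)"
    by (intro comp_assoc_rev) (use g in auto)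
  also have "\<dots> \<approx>
      Comp (Comp (whisker [] (norm z0 w) ?a) (whisker (word ?z) (Gen g) [])) (norm ?z ?b)"
    using g whisker_interchange[of "norm z0 w" "Gen g" "[]" "[]"]
    by (intro comp_cong_left) (auto intro: eqv.sym)
  also have "\<dots> \<approx>
      Comp (whisker [] (norm z0 w) ?a) (Comp (whisker (word ?z) (Gen g) []) (norm ?z ?b))"
    by (intro eqv.comp_assoc) (use g in auto)
  also have "\<dots> \<approx> Comp (whisker [] (norm z0 w) ?a) (norm ?z ?a)"
    by (intro comp_cong_right natural_Gen g) (use g in auto)
  also have "\<dots> \<approx> norm z0 (w @ ?a)"
    by (intro eqv.sym[OF norm_append]) simp
  finally show ?thesis .
qed

lemma norm_natural_extend:
  assumes t: "valid Gs t"
    and natural: "Comp (whisker w t []) (norm z0 (w @ dcod t)) \<approx> norm z0 (w @ ddom t)"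
  shows "Comp (whisker w t b) (norm z0 (w @ dcod t @ b)) \<approx> norm z0 (w @ ddom t @ b)"
proof -
  let ?z = "foldl step z0 (w @ dcod t)"
  have "word ?z = word (foldl step z0 (w @ ddom t))"
    using eqv_typed[OF natural] by simp
  then have same: "?z = foldl step z0 (w @ ddom t)"
    by (intro word_inj) simp_all
  have "Comp (whisker w t b) (norm z0 (w @ dcod t @ b))
      \<approx> Comp (whisker w t b) (Comp (whisker [] (norm z0 (w @ dcod t)) b) (norm ?z b))"
    by (intro comp_cong_right) (use t norm_append[of z0 "w @ dcod t" b] in auto)
  also have "\<dots> \<approx> Comp (Comp (whisker w t b) (whisker [] (norm z0 (w @ dcod t)) b)) (norm ?z b)"
    by (intro comp_assoc_rev) (use t in auto)
  also have "\<dots> \<approx>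
      Comp (Comp (whisker [] (whisker w t []) b) (whisker [] (norm z0 (w @ dcod t)) b)) (norm ?z b)"
    by (intro comp_cong_left eqv.comp_cong whisker_whisker_rev eqv.refl) (use t in auto)
  also have "\<dots> \<approx> Comp (whisker [] (Comp (whisker w t []) (norm z0 (w @ dcod t))) b) (norm ?z b)"
    by (intro comp_cong_left eqv.sym[OF whisker_Comp]) (use t in auto)
  also have "\<dots> \<approx> Comp (whisker [] (norm z0 (w @ ddom t)) b) (norm ?z b)"
    by (intro comp_cong_left whisker_cong natural) (use t same in auto)
  also have "\<dots> \<approx> norm z0 (w @ ddom t @ b)"
    using eqv.sym[OF norm_append[of z0 "w @ ddom t" b]] same by simp
  finally show ?thesis .
qed

text \<open>Whiskering on both sides makes the \<^const>\<open>Comp\<close> and \<^const>\<open>Tens\<close> cases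
  immediate; all the work is in the generator case.\<close>

lemma norm_natural:
  "valid Gs t \<Longrightarrow> Comp (whisker w t b) (norm z0 (w @ dcod t @ b)) \<approx> norm z0 (w @ ddom t @ b)"
proof (induction t arbitrary: w b)
  case (Idt a)
  have "Comp (whisker w (Idt a) b) (norm z0 (w @ a @ b))
      \<approx> Comp (Idt (w @ a @ b)) (norm z0 (w @ a @ b))"
    by (intro comp_cong_left whisker_Idt) auto
  also have "\<dots> \<approx> norm z0 (w @ a @ b)" by (rule comp_Idt_left) auto
  finally show ?case by simp
next
  case (Gen g)
  then show ?case by (intro norm_natural_extend) (simp_all add: norm_natural_Gen_Nil)
next
  case (Comp f g)
  have v: "valid Gs f" "valid Gs g" "dcod f = ddom g" using Comp.prems by auto
  have "Comp (whisker w (Comp f g) b) (norm z0 (w @ dcod g @ b))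
      \<approx> Comp (Comp (whisker w f b) (whisker w g b)) (norm z0 (w @ dcod g @ b))"
    by (intro comp_cong_left whisker_Comp v) (use v in auto)
  also have "\<dots> \<approx> Comp (whisker w f b) (Comp (whisker w g b) (norm z0 (w @ dcod g @ b)))"
    by (intro eqv.comp_assoc) (use v in auto)
  also have "\<dots> \<approx> Comp (whisker w f b) (norm z0 (w @ dcod f @ b))"
    by (intro comp_cong_right) (use v Comp.IH(2)[OF v(2), of w b] in auto)
  also have "\<dots> \<approx> norm z0 (w @ ddom f @ b)"
    by (rule Comp.IH(1)[OF v(1)])
  finally show ?case by simp
next
  case (Tens f g)
  have v: "valid Gs f" "valid Gs g" using Tens.prems by auto
  have "Comp (whisker w (Tens f g) b) (norm z0 (w @ dcod f @ dcod g @ b))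
      \<approx> Comp (Comp (whisker w f (ddom g @ b)) (whisker (w @ dcod f) g b))
             (norm z0 (w @ dcod f @ dcod g @ b))"
    by (intro comp_cong_left whisker_Tens v) (use v in auto)
  also have "\<dots> \<approx>
      Comp (whisker w f (ddom g @ b))
           (Comp (whisker (w @ dcod f) g b) (norm z0 (w @ dcod f @ dcod g @ b)))"
    by (intro eqv.comp_assoc) (use v in auto)
  also have "\<dots> \<approx> Comp (whisker w f (ddom g @ b)) (norm z0 (w @ dcod f @ ddom g @ b))"
    by (intro comp_cong_right) (use v Tens.IH(2)[OF v(2), of "w @ dcod f" b] in auto)
  also have "\<dots> \<approx> norm z0 (w @ ddom f @ ddom g @ b)"
    by (rule Tens.IH(1)[OF v(1)])
  finally show ?case by simp
qed

lemma foldl_ddom_eq_dcod: "valid Gs t \<Longrightarrow> foldl step z0 (ddom t) = foldl step z0 (dcod t)"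
  using eqv_typed[OF norm_natural[of t "[]" "[]"]] word_inj by simp

lemma eqv_norm_denorm: "valid Gs t \<Longrightarrow> t \<approx> Comp (norm z0 (ddom t)) (denorm z0 (dcod t))"
proof -
  assume t: "valid Gs t"
  have "t \<approx> Comp t (Idt (dcod t))" by (rule eqv.sym, rule comp_Idt_right) (use t in auto)
  also have "\<dots> \<approx> Comp t (Comp (norm z0 (dcod t)) (denorm z0 (dcod t)))"
    by (intro comp_cong_right) (use t eqv.sym[OF norm_denorm[of z0 "dcod t"]] in auto)
  also have "\<dots> \<approx> Comp (Comp (whisker [] t []) (norm z0 (dcod t))) (denorm z0 (dcod t))"
    by (intro eqv.trans[OF comp_assoc_rev] comp_cong_left eqv.comp_cong eqv.sym[OF whisker_Nil]
        eqv.refl)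
      (use t in auto)
  also have "\<dots> \<approx> Comp (norm z0 (ddom t)) (denorm z0 (dcod t))"
    by (intro comp_cong_left) (use t norm_natural[of t "[]" "[]"] in auto)
  finally show ?thesis .
qed

lemma faithful:
  assumes "valid Gs s" "valid Gs t" "ddom s = ddom t" "dcod s = dcod t"
  shows "s \<approx> t"
proof -
  have "s \<approx> Comp (norm z0 (ddom t)) (denorm z0 (dcod t))"
    using eqv_norm_denorm[OF assms(1)] assms(3,4) by simp
  then show ?thesis using eqv.trans eqv.sym[OF eqv_norm_denorm[OF assms(2)]] by blast
qed

lemma full:
  "foldl step z0 u = foldl step z0 v \<Longrightarrow> \<exists>t. valid Gs t \<and> ddom t = u \<and> dcod t = v"
  by (intro exI[of _ "Comp (norm z0 u) (denorm z0 v)"]) simp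

lemma monoidal_equiv_K_if_classifying:
  assumes carrier: "\<And>u. F u \<in> carrier G"
    and unit: "F [] = \<one>\<^bsub>G\<^esub>"
    and mult: "\<And>u v. F (u @ v) = F u \<otimes>\<^bsub>G\<^esub> F v"
    and classifying: "\<And>u v. F u = F v \<longleftrightarrow> foldl step z0 u = foldl step z0 v"
    and surj: "\<And>g. g \<in> carrier G \<Longrightarrow> \<exists>u. F u = g"
  shows "monoidal_equiv_K Gs Rs G"
  unfolding monoidal_equiv_K_def
  using carrier unit mult classifying surj foldl_ddom_eq_dcod full faithful
  by (intro exI[of _ F]) blast

end

locale B_presentation = presentation +
  assumes B_gens_subset: "B_gens \<subseteq> Gs" and B_rels_subset: "B_rels \<subseteq> Rs"
begin

lemma B_gens_in [simp]: "CupL \<in> Gs" "CapL \<in> Gs" "CupR \<in> Gs" "CapR \<in> Gs"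
  using B_gens_subset by (auto simp: B_gens_def)

lemma B_rel: "(s, t) \<in> B_rels \<Longrightarrow> s \<approx> t"
  using B_rels_subset eqv.rel by blast

lemma B_rel_whiskered_left:
  assumes "(Comp (Tens (Idt a) f) (Tens g (Idt b)), Idt c) \<in> B_rels"
  shows "Comp (whisker a f []) (whisker [] g b) \<approx> Idt c"
proof -
  have "Comp (whisker a f []) (whisker [] g b) \<approx> Comp (Tens (Idt a) f) (Tens g (Idt b))"
    by (intro eqv.comp_cong eqv.sym[OF Tens_Idt_left] eqv.sym[OF Tens_Idt_right])
      (use eqv_typed[OF B_rel[OF assms]] in auto)
  also have "\<dots> \<approx> Idt c" by (rule B_rel[OF assms])
  finally show ?thesis .
qed

lemma B_rel_whiskered_right:
  assumes "(Comp (Tens f (Idt b)) (Tens (Idt a) g), Idt c) \<in> B_rels"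
  shows "Comp (whisker [] f b) (whisker a g []) \<approx> Idt c"
proof -
  have "Comp (whisker [] f b) (whisker a g []) \<approx> Comp (Tens f (Idt b)) (Tens (Idt a) g)"
    by (intro eqv.comp_cong eqv.sym[OF Tens_Idt_left] eqv.sym[OF Tens_Idt_right])
      (use eqv_typed[OF B_rel[OF assms]] in auto)
  also have "\<dots> \<approx> Idt c" by (rule B_rel[OF assms])
  finally show ?thesis .
qed

lemma zigzag_L_Up: "Comp (whisker [] (Gen CupL) [Up]) (whisker [Up] (Gen CapL) []) \<approx> Idt [Up]"
  by (rule B_rel_whiskered_right) (simp add: B_rels_def)

lemma zigzag_L_Dn: "Comp (whisker [Dn] (Gen CupL) []) (whisker [] (Gen CapL) [Dn]) \<approx> Idt [Dn]"
  by (rule B_rel_whiskered_left) (simp add: B_rels_def)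

lemma zigzag_R_Up: "Comp (whisker [Up] (Gen CupR) []) (whisker [] (Gen CapR) [Up]) \<approx> Idt [Up]"
  by (rule B_rel_whiskered_left) (simp add: B_rels_def)

lemma circle_L: "Comp (Gen CupL) (Gen CapR) \<approx> Idt []"
  by (rule B_rel) (simp add: B_rels_def)

lemma circle_R: "Comp (Gen CupR) (Gen CapL) \<approx> Idt []"
  by (rule B_rel) (simp add: B_rels_def)

lemma CapR_CupL: "Comp (Gen CapR) (Gen CupL) \<approx> Idt [Up, Dn]"
  by (rule eqv.sym, rule B_rel) (simp add: B_rels_def)

lemma CapL_CupR: "Comp (Gen CapL) (Gen CupR) \<approx> Idt [Dn, Up]"
  by (rule eqv.sym, rule B_rel) (simp add: B_rels_def)

lemma whisker_CapL_eq_CapR: "whisker [Up] (Gen CapL) [] \<approx> whisker [] (Gen CapR) [Up]"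
proof -
  have "whisker [Up] (Gen CapL) [] \<approx> Comp (Idt [Up, Dn, Up]) (whisker [Up] (Gen CapL) [])"
    by (rule eqv.sym, rule comp_Idt_left) auto
  also have "\<dots> \<approx>
      Comp (Comp (whisker [] (Gen CapR) [Up]) (whisker [] (Gen CupL) [Up]))
           (whisker [Up] (Gen CapL) [])"
    using eqv.sym[OF whisker_inverse[OF CapR_CupL, of "[]" "[Up]"]] by (intro comp_cong_left) auto
  also have "\<dots> \<approx>
      Comp (whisker [] (Gen CapR) [Up])
           (Comp (whisker [] (Gen CupL) [Up]) (whisker [Up] (Gen CapL) []))"
    by (intro eqv.comp_assoc) auto
  also have "\<dots> \<approx> Comp (whisker [] (Gen CapR) [Up]) (Idt [Up])"
    by (intro comp_cong_right zigzag_L_Up) auto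
  also have "\<dots> \<approx> whisker [] (Gen CapR) [Up]" by (intro comp_Idt_right) auto
  finally show ?thesis .
qed

end

definition word_Z :: "int \<Rightarrow> orient list" where
  "word_Z z = (if 0 \<le> z then replicate (nat z) Up else replicate (nat (- z)) Dn)"

fun step_Z :: "int \<Rightarrow> orient \<Rightarrow> int" where
  "step_Z z Up = z + 1"
| "step_Z z Dn = z - 1"

fun move_Z :: "int \<Rightarrow> orient \<Rightarrow> dgm" where
  "move_Z z Up =
     (if 0 \<le> z then Idt (word_Z z @ [Up]) else whisker (word_Z (z + 1)) (Gen CapL) [])"
| "move_Z z Dn =
     (if 0 < z then whisker (word_Z (z - 1)) (Gen CapR) [] else Idt (word_Z z @ [Dn]))"

fun move_back_Z :: "int \<Rightarrow> orient \<Rightarrow> dgm" where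
  "move_back_Z z Up =
     (if 0 \<le> z then Idt (word_Z z @ [Up]) else whisker (word_Z (z + 1)) (Gen CupR) [])"
| "move_back_Z z Dn =
     (if 0 < z then whisker (word_Z (z - 1)) (Gen CupL) [] else Idt (word_Z z @ [Dn]))"

lemma word_Z_succ: "0 \<le> z \<Longrightarrow> word_Z (z + 1) = word_Z z @ [Up]"
  by (simp add: word_Z_def nat_add_distrib replicate_append_same)

lemma word_Z_pred:
  assumes "z \<le> 0"
  shows "word_Z (z - 1) = word_Z z @ [Dn]"
proof -
  have "nat (- (z - 1)) = Suc (nat (- z))" using assms by arith
  then show ?thesis using assms by (cases "z = 0") (simp_all add: word_Z_def replicate_append_same)
qed

lemma foldl_step_Z_replicate:
  "foldl step_Z z (replicate n Up) = z + int n" "foldl step_Z z (replicate n Dn) = z - int n"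
  by (induction n arbitrary: z) auto

lemma foldl_step_Z_word_Z: "foldl step_Z 0 (word_Z z) = z"
  by (simp add: word_Z_def foldl_step_Z_replicate)

lemma foldl_step_Z_shift: "foldl step_Z z u = z + foldl step_Z 0 u"
proof (induction u arbitrary: z)
  case (Cons x u)
  show ?case
    by (cases x)
      (simp_all add: Cons.IH[of "z + 1"] Cons.IH[of "z - 1"] Cons.IH[of 1] Cons.IH[of "- 1"])
qed simp

sublocale B_presentation \<subseteq> Z: normalisation Gs Rs word_Z step_Z "\<lambda>_. True" 0 move_Z move_back_Z
proof
  fix z :: int and x :: orient
  have pos: "word_Z z = word_Z (z - 1) @ [Up]" if "0 < z"
    using word_Z_succ[of "z - 1"] that by simp
  have neg: "word_Z z = word_Z (z + 1) @ [Dn]" if "z < 0"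
    using word_Z_pred[of "z + 1"] that by simp
  show "valid Gs (move_Z z x) \<and> ddom (move_Z z x) = word_Z z @ [x] \<and>
      dcod (move_Z z x) = word_Z (step_Z z x)"
    and "valid Gs (move_back_Z z x) \<and> ddom (move_back_Z z x) = word_Z (step_Z z x) \<and>
      dcod (move_back_Z z x) = word_Z z @ [x]"
    by (cases x; auto simp: pos neg word_Z_succ word_Z_pred)+
  show "Comp (move_Z z x) (move_back_Z z x) \<approx> Idt (word_Z z @ [x])"
  proof (cases x)
    case Up
    show ?thesis
    proof (cases "0 \<le> z")
      case True
      then show ?thesis using Up by (simp add: comp_Idt_left)
    next
      case False
      then show ?thesis
        using Up whisker_inverse[OF CapL_CupR, of "word_Z (z + 1)" "[]"] neg by simp
    qed
  next
    case Dn
    show ?thesis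
    proof (cases "0 < z")
      case True
      then show ?thesis
        using Dn whisker_inverse[OF CapR_CupL, of "word_Z (z - 1)" "[]"] pos by simp
    next
      case False
      then show ?thesis using Dn by (simp add: comp_Idt_left)
    qed
  qed
next
  fix z z' :: int
  assume "word_Z z = word_Z z'"
  then have "foldl step_Z 0 (word_Z z) = foldl step_Z 0 (word_Z z')" by simp
  then show "z = z'" by (simp only: foldl_step_Z_word_Z)
next
  show "word_Z 0 = []" by (simp add: word_Z_def)
qed simp_all

context B_presentation
begin

lemma natural_CupL_Z: "Comp (whisker (word_Z z) (Gen CupL) []) (Z.norm z [Up, Dn]) \<approx> Z.norm z []"
proof -
  have norm: "Z.norm z [Up, Dn] \<approx> Comp (whisker [] (move_Z z Up) [Dn]) (move_Z (z + 1) Dn)"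
    using Z.norm_pair[of z Up Dn] by simp
  show ?thesis
  proof (cases "0 \<le> z")
    case True
    let ?W = "word_Z z"
    have mv: "move_Z z Up = Idt (?W @ [Up])" "move_Z (z + 1) Dn = whisker ?W (Gen CapR) []"
      using True by simp_all
    have "Comp (whisker [] (move_Z z Up) [Dn]) (move_Z (z + 1) Dn)
        \<approx> Comp (Idt (?W @ [Up, Dn])) (whisker ?W (Gen CapR) [])"
      unfolding mv by (intro comp_cong_left) (use whisker_Idt[of "[]" "?W @ [Up]" "[Dn]"] in auto)
    also have "\<dots> \<approx> whisker ?W (Gen CapR) []" by (intro comp_Idt_left) auto
    finally have e: "Z.norm z [Up, Dn] \<approx> whisker ?W (Gen CapR) []" using norm eqv.trans by blast
    have "Comp (whisker ?W (Gen CupL) []) (Z.norm z [Up, Dn])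
        \<approx> Comp (whisker ?W (Gen CupL) []) (whisker ?W (Gen CapR) [])"
      by (intro comp_cong_right e) (auto simp del: norm_dgm.simps)
    also have "\<dots> \<approx> Idt ?W" using whisker_inverse[OF circle_L, of ?W "[]"] by simp
    finally show ?thesis by simp
  next
    case False
    let ?P = "word_Z (z + 1)"
    have W: "word_Z z = ?P @ [Dn]" using word_Z_pred[of "z + 1"] False by simp
    have mv: "move_Z z Up = whisker ?P (Gen CapL) []" "move_Z (z + 1) Dn = Idt (?P @ [Dn])"
      using False by simp_all
    have "Comp (whisker [] (move_Z z Up) [Dn]) (move_Z (z + 1) Dn)
        \<approx> whisker [] (whisker ?P (Gen CapL) []) [Dn]"
      unfolding mv by (intro comp_Idt_right) auto
    also have "\<dots> \<approx> whisker ?P (whisker [] (Gen CapL) [Dn]) []"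
      by (intro eqv.trans[OF whisker_whisker] whisker_whisker_rev) auto
    finally have e: "Z.norm z [Up, Dn] \<approx> whisker ?P (whisker [] (Gen CapL) [Dn]) []"
      using norm eqv.trans by blast
    have "Comp (whisker (word_Z z) (Gen CupL) []) (Z.norm z [Up, Dn])
        \<approx> Comp (whisker ?P (whisker [Dn] (Gen CupL) []) [])
               (whisker ?P (whisker [] (Gen CapL) [Dn]) [])"
      unfolding W by (intro eqv.comp_cong e whisker_whisker_rev) (use W in auto)
    also have "\<dots> \<approx> Idt (?P @ [Dn])" using whisker_inverse[OF zigzag_L_Dn, of ?P "[]"] by simp
    finally show ?thesis using W by simp
  qed
qed

lemma natural_CupR_Z: "Comp (whisker (word_Z z) (Gen CupR) []) (Z.norm z [Dn, Up]) \<approx> Z.norm z []"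
proof -
  have norm: "Z.norm z [Dn, Up] \<approx> Comp (whisker [] (move_Z z Dn) [Up]) (move_Z (z - 1) Up)"
    using Z.norm_pair[of z Dn Up] by simp
  show ?thesis
  proof (cases "0 < z")
    case True
    let ?P = "word_Z (z - 1)"
    have W: "word_Z z = ?P @ [Up]" using word_Z_succ[of "z - 1"] True by simp
    have mv: "move_Z z Dn = whisker ?P (Gen CapR) []" "move_Z (z - 1) Up = Idt (?P @ [Up])"
      using True by simp_all
    have "Comp (whisker [] (move_Z z Dn) [Up]) (move_Z (z - 1) Up)
        \<approx> whisker [] (whisker ?P (Gen CapR) []) [Up]"
      unfolding mv by (intro comp_Idt_right) auto
    also have "\<dots> \<approx> whisker ?P (whisker [] (Gen CapR) [Up]) []"
      by (intro eqv.trans[OF whisker_whisker] whisker_whisker_rev) auto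
    finally have e: "Z.norm z [Dn, Up] \<approx> whisker ?P (whisker [] (Gen CapR) [Up]) []"
      using norm eqv.trans by blast
    have "Comp (whisker (word_Z z) (Gen CupR) []) (Z.norm z [Dn, Up])
        \<approx> Comp (whisker ?P (whisker [Up] (Gen CupR) []) [])
               (whisker ?P (whisker [] (Gen CapR) [Up]) [])"
      unfolding W by (intro eqv.comp_cong e whisker_whisker_rev) (use W in auto)
    also have "\<dots> \<approx> Idt (?P @ [Up])" using whisker_inverse[OF zigzag_R_Up, of ?P "[]"] by simp
    finally show ?thesis using W by simp
  next
    case False
    let ?W = "word_Z z"
    have mv: "move_Z z Dn = Idt (?W @ [Dn])" "move_Z (z - 1) Up = whisker ?W (Gen CapL) []"
      using False by simp_all
    have "Comp (whisker [] (move_Z z Dn) [Up]) (move_Z (z - 1) Up)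
        \<approx> Comp (Idt (?W @ [Dn, Up])) (whisker ?W (Gen CapL) [])"
      unfolding mv by (intro comp_cong_left) (use whisker_Idt[of "[]" "?W @ [Dn]" "[Up]"] in auto)
    also have "\<dots> \<approx> whisker ?W (Gen CapL) []" by (intro comp_Idt_left) auto
    finally have e: "Z.norm z [Dn, Up] \<approx> whisker ?W (Gen CapL) []" using norm eqv.trans by blast
    have "Comp (whisker ?W (Gen CupR) []) (Z.norm z [Dn, Up])
        \<approx> Comp (whisker ?W (Gen CupR) []) (whisker ?W (Gen CapL) [])"
      by (intro comp_cong_right e) (auto simp del: norm_dgm.simps)
    also have "\<dots> \<approx> Idt ?W" using whisker_inverse[OF circle_R, of ?W "[]"] by simp
    finally show ?thesis by simp
  qed
qed

lemma natural_Gen_Z: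
  assumes "g \<in> B_gens"
  shows "Comp (whisker (word_Z z) (Gen g) []) (Z.norm z (gcod g)) \<approx> Z.norm z (gdom g)"
proof -
  let ?natural = "\<lambda>g. Comp (whisker (word_Z z) (Gen g) []) (Z.norm z (gcod g)) \<approx> Z.norm z (gdom g)"
  have CupL: "?natural CupL" and CupR: "?natural CupR"
    using natural_CupL_Z natural_CupR_Z by simp_all
  have CapR: "?natural CapR"
    by (rule Z.natural_if_inverse[OF _ _ _ _ _ _ CupL]) (use CapR_CupL in simp_all)
  have CapL: "?natural CapL"
    by (rule Z.natural_if_inverse[OF _ _ _ _ _ _ CupR]) (use CapL_CupR in simp_all)
  from assms consider "g = CupL" | "g = CupR" | "g = CapR" | "g = CapL"
    unfolding B_gens_def by blast
  then show ?thesis using CupL CupR CapR CapL by cases blast+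
qed

end

lemma B_rels_typed:
  "(s, t) \<in> B_rels \<Longrightarrow> valid B_gens s \<and> valid B_gens t \<and> ddom s = ddom t \<and> dcod s = dcod t"
  by (auto simp: B_rels_def B_gens_def)

theorem B_equiv_integer_group: "monoidal_equiv_K B_gens B_rels integer_group"
proof -
  interpret B_presentation B_gens B_rels
    by unfold_locales (auto dest: B_rels_typed)
  interpret Z: natural_normalisation B_gens B_rels word_Z step_Z "\<lambda>_. True" 0 move_Z move_back_Z
    by unfold_locales (rule natural_Gen_Z)
  show ?thesis
  proof (rule Z.monoidal_equiv_K_if_classifying[where F = "foldl step_Z 0"])
    show "foldl step_Z 0 (u @ v) = foldl step_Z 0 u \<otimes>\<^bsub>integer_group\<^esub> foldl step_Z 0 v" for u v
      using foldl_step_Z_shift[of "foldl step_Z 0 u" v] by simp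
    show "\<exists>u. foldl step_Z 0 u = g" for g
      using foldl_step_Z_word_Z by blast
  qed simp_all
qed

declare replicate_append_same [simp] replicate_app_Cons_same [simp]

locale Bn_presentation = B_presentation +
  fixes m :: nat
  assumes vertex_gens: "VOut (Suc m) \<in> Gs" "VIn (Suc m) \<in> Gs"
    and Bn_rels_subset: "Bn_rels (Suc m) \<subseteq> Rs"
begin

abbreviation "V_out \<equiv> Gen (VOut (Suc m))"
abbreviation "V_in \<equiv> Gen (VIn (Suc m))"
abbreviation "ups k \<equiv> replicate k Up"

lemma vertex_gens_in [simp]: "VOut (Suc m) \<in> Gs" "VIn (Suc m) \<in> Gs"
  using vertex_gens by auto

lemma Bn_rel: "(s, t) \<in> Bn_rels (Suc m) \<Longrightarrow> s \<approx> t"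
  using Bn_rels_subset eqv.rel by blast

lemma VIn_VOut: "Comp V_in V_out \<approx> Idt []"
  by (rule Bn_rel) (simp add: Bn_rels_def)

lemma VOut_VIn: "Comp V_out V_in \<approx> Idt (Up # ups m)"
  using Bn_rel[of "Comp V_out V_in" "Idt (ups (Suc m))"] by (simp add: Bn_rels_def)

lemma VOut_rotation:
  "Comp (Comp (whisker [] (Gen CupR) (Up # ups m)) (whisker [Dn] V_out [Up])) (Gen CapL) \<approx> V_out"
proof -
  have "Comp (Comp (whisker [] (Gen CupR) (Up # ups m)) (whisker [Dn] V_out [Up])) (Gen CapL)
      \<approx> Comp (Comp (Tens (Gen CupR) (Idt (Up # ups m))) (Tens (Tens (Idt [Dn]) V_out) (Idt [Up])))
             (Gen CapL)"
    unfolding whisker_def[of "[Dn]"]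
    by (intro comp_cong_left eqv.comp_cong eqv.sym[OF Tens_Idt_right] eqv.refl) auto
  also have "\<dots> \<approx> V_out" by (rule Bn_rel) (simp add: Bn_rels_def)
  finally show ?thesis .
qed

lemma VIn_rotation:
  "Comp (Comp (Gen CupR) (whisker [Dn] V_in [Up])) (whisker [] (Gen CapL) (Up # ups m)) \<approx> V_in"
proof -
  have "Comp (Comp (Gen CupR) (whisker [Dn] V_in [Up])) (whisker [] (Gen CapL) (Up # ups m))
      \<approx> Comp (Comp (Gen CupR) (Tens (Tens (Idt [Dn]) V_in) (Idt [Up])))
             (Tens (Gen CapL) (Idt (Up # ups m)))"
    unfolding whisker_def[of "[Dn]"]
    by (intro eqv.comp_cong eqv.sym[OF Tens_Idt_right] eqv.refl) auto
  also have "\<dots> \<approx> V_in" by (rule Bn_rel) (simp add: Bn_rels_def)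
  finally show ?thesis .
qed

lemma whisker_VOut_Up: "whisker [Up] V_out [] \<approx> whisker [] V_out [Up]"
proof -
  let ?U = "Up # ups m" and ?cap = "whisker [] (Gen CapR) [Up]"
  have "whisker [Up] V_out []
      \<approx> whisker [Up] (Comp (Comp (whisker [] (Gen CupR) ?U) (whisker [Dn] V_out [Up]))
                           (Gen CapL)) []"
    by (rule whisker_cong, rule eqv.sym, rule VOut_rotation)
  also have "\<dots> \<approx> Comp (Comp (whisker [Up] (Gen CupR) ?U) (whisker [Up, Dn] V_out [Up])) ?cap"
    by (intro eqv.trans[OF whisker_Comp] eqv.comp_cong eqv.trans[OF whisker_Comp] whisker_whisker
        whisker_CapL_eq_CapR) auto
  also have "\<dots> \<approx> Comp (whisker [Up] (Gen CupR) ?U) (Comp (whisker [Up, Dn] V_out [Up]) ?cap)"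
    by (intro eqv.comp_assoc) auto
  also have "\<dots> \<approx>
      Comp (whisker [Up] (Gen CupR) ?U)
           (Comp (whisker [] (Gen CapR) (Up # ?U)) (whisker [] V_out [Up]))"
    using whisker_interchange[of "Gen CapR" V_out "[]" "[Up]"]
    by (intro comp_cong_right) (auto intro: eqv.sym)
  also have "\<dots> \<approx>
      Comp (Comp (whisker [Up] (Gen CupR) ?U) (whisker [] (Gen CapR) (Up # ?U)))
           (whisker [] V_out [Up])"
    by (intro comp_assoc_rev) auto
  also have "\<dots> \<approx> Comp (Idt (Up # ?U)) (whisker [] V_out [Up])"
  proof -
    have "Comp (whisker [Up] (Gen CupR) ?U) (whisker [] (Gen CapR) (Up # ?U))
        \<approx> Comp (whisker [] (whisker [Up] (Gen CupR) []) ?U) (whisker [] ?cap ?U)"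
      by (intro eqv.comp_cong whisker_whisker_rev) auto
    also have "\<dots> \<approx> Idt (Up # ?U)" using whisker_inverse[OF zigzag_R_Up, of "[]" ?U] by simp
    finally show ?thesis by (intro comp_cong_left) auto
  qed
  also have "\<dots> \<approx> whisker [] V_out [Up]" by (intro comp_Idt_left) auto
  finally show ?thesis .
qed

lemma whisker_VOut_ups: "whisker (ups k) V_out [] \<approx> whisker [] V_out (ups k)"
proof (induction k)
  case 0
  then show ?case by (simp add: eqv.refl)
next
  case (Suc k)
  have "whisker (ups (Suc k)) V_out [] \<approx> whisker [Up] (whisker (ups k) V_out []) []"
    by (intro whisker_whisker_rev) auto
  also have "\<dots> \<approx> whisker [Up] (whisker [] V_out (ups k)) []" by (rule whisker_cong[OF Suc.IH])
  also have "\<dots> \<approx> whisker [] (whisker [Up] V_out []) (ups k)"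
    by (intro eqv.trans[OF whisker_whisker] whisker_whisker_rev) auto
  also have "\<dots> \<approx>
      whisker [] (whisker [] V_out [Up]) (ups k)" by (rule whisker_cong[OF whisker_VOut_Up])
  also have "\<dots> \<approx> whisker [] V_out (ups (Suc k))" by (intro whisker_whisker) auto
  finally show ?case .
qed

end

fun step_N :: "nat \<Rightarrow> nat \<Rightarrow> orient \<Rightarrow> nat" where
  "step_N m k Up = (if k = m then 0 else Suc k)"
| "step_N m 0 Dn = m"
| "step_N m (Suc k) Dn = k"

text \<open>An \<^const>\<open>Up\<close> strand at the top state \<open>m\<close> completes an outgoing vertex; a
  \<^const>\<open>Dn\<close> strand at state \<open>0\<close> is traded for \<open>m\<close> upward strands by opening an incoming
  vertex next to it and capping it off against the first strand of that vertex.\<close>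

fun move_N :: "nat \<Rightarrow> nat \<Rightarrow> orient \<Rightarrow> dgm" where
  "move_N m k Up = (if k = m then Gen (VOut (Suc m)) else Idt (replicate k Up @ [Up]))"
| "move_N m 0 Dn =
     Comp (whisker [Dn] (Gen (VIn (Suc m))) []) (whisker [] (Gen CapL) (replicate m Up))"
| "move_N m (Suc k) Dn = whisker (replicate k Up) (Gen CapR) []"

fun move_back_N :: "nat \<Rightarrow> nat \<Rightarrow> orient \<Rightarrow> dgm" where
  "move_back_N m k Up = (if k = m then Gen (VIn (Suc m)) else Idt (replicate k Up @ [Up]))"
| "move_back_N m 0 Dn =
     Comp (whisker [] (Gen CupR) (replicate m Up)) (whisker [Dn] (Gen (VOut (Suc m))) [])"
| "move_back_N m (Suc k) Dn = whisker (replicate k Up) (Gen CupL) []"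

lemma step_N_le: "k \<le> m \<Longrightarrow> step_N m k x \<le> m"
  by (cases x; cases k) auto

sublocale Bn_presentation \<subseteq> N: normalisation Gs Rs "\<lambda>k. replicate k Up" "step_N m" "\<lambda>k. k \<le> m" 0
  "move_N m" "move_back_N m"
proof
  fix k x
  assume k: "k \<le> m"
  show "step_N m k x \<le> m" using k by (rule step_N_le)
  show "valid Gs (move_N m k x) \<and> ddom (move_N m k x) = ups k @ [x] \<and>
      dcod (move_N m k x) = ups (step_N m k x)"
    by (cases x) (simp, cases k, simp_all)
  show "valid Gs (move_back_N m k x) \<and> ddom (move_back_N m k x) = ups (step_N m k x) \<and>
      dcod (move_back_N m k x) = ups k @ [x]"
    by (cases x) (simp, cases k, simp_all)
  show "Comp (move_N m k x) (move_back_N m k x) \<approx> Idt (ups k @ [x])"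
  proof (cases x)
    case Up
    then show ?thesis using VOut_VIn by (auto simp: comp_Idt_left)
  next
    case Dn
    show ?thesis
    proof (cases k)
      case (Suc j)
      then show ?thesis using Dn whisker_inverse[OF CapR_CupL, of "ups j" "[]"] by simp
    next
      case 0
      let ?a = "whisker [Dn] V_in []" and ?b = "whisker [] (Gen CapL) (ups m)"
        and ?c = "whisker [] (Gen CupR) (ups m)" and ?d = "whisker [Dn] V_out []"
      have "Comp (Comp ?a ?b) (Comp ?c ?d) \<approx> Comp ?a (Comp (Comp ?b ?c) ?d)"
        by (intro eqv.trans[OF eqv.comp_assoc] comp_cong_right comp_assoc_rev) auto
      also have "\<dots> \<approx> Comp ?a (Comp (Idt (Dn # Up # ups m)) ?d)"
        using whisker_inverse[OF CapL_CupR, of "[]" "ups m"]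
        by (intro comp_cong_right comp_cong_left) auto
      also have "\<dots> \<approx> Comp ?a ?d" by (intro comp_cong_right comp_Idt_left) auto
      also have "\<dots> \<approx> Idt [Dn]" using whisker_inverse[OF VIn_VOut, of "[Dn]" "[]"] by simp
      finally show ?thesis using 0 Dn by simp
    qed
  qed
qed auto

context Bn_presentation
begin

lemma vertices_interchange:
  "Comp (whisker [] V_out [Dn]) (Comp (whisker [Dn] V_in []) (whisker [] (Gen CapL) (ups m)))
   \<approx> Comp (whisker (Up # ups m @ [Dn]) V_in [])
       (Comp (whisker (Up # ups m) (Gen CapL) (ups m)) (whisker [] V_out (ups m)))"
  (is "?lhs \<approx> Comp ?a' (Comp ?cap' ?v')")
proof -
  let ?v = "whisker [] V_out [Dn]" and ?a = "whisker [Dn] V_in []"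
    and ?cap = "whisker [] (Gen CapL) (ups m)"
  have "?lhs \<approx> Comp (Comp ?v ?a) ?cap" by (intro comp_assoc_rev) auto
  also have "\<dots> \<approx> Comp (Comp ?a' (whisker [] V_out (Dn # Up # ups m))) ?cap"
    by (intro comp_cong_left) (use whisker_interchange_mid[of V_out V_in "[]" "[Dn]" "[]"] in auto)
  also have "\<dots> \<approx> Comp ?a' (Comp (whisker [] V_out (Dn # Up # ups m)) ?cap)"
    by (intro eqv.comp_assoc) auto
  also have "\<dots> \<approx> Comp ?a' (Comp ?cap' ?v')"
    using whisker_interchange_mid[of V_out "Gen CapL" "[]" "[]" "ups m"]
    by (intro comp_cong_right) auto
  finally show ?thesis .
qed

lemma natural_CupL_N_top: "Comp (whisker (ups m) (Gen CupL) []) (N.norm m [Up, Dn]) \<approx> N.norm m []"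
proof -
  let ?U = "ups m"
  let ?cup = "whisker ?U (Gen CupL) []" and ?a = "whisker (Up # ?U @ [Dn]) V_in []"
    and ?cap = "whisker (Up # ?U) (Gen CapL) ?U" and ?v = "whisker [] V_out ?U"
  have "N.norm m [Up, Dn]
      \<approx> Comp (whisker [] V_out [Dn]) (Comp (whisker [Dn] V_in []) (whisker [] (Gen CapL) ?U))"
    using N.norm_pair[of m Up Dn] by simp
  also have "\<dots> \<approx> Comp ?a (Comp ?cap ?v)" by (rule vertices_interchange)
  finally have norm: "N.norm m [Up, Dn] \<approx> Comp ?a (Comp ?cap ?v)" .
  have zigzag: "Comp (whisker ?U (Gen CupL) (Up # ?U)) ?cap \<approx> Idt (?U @ Up # ?U)"
  proof -
    have "Comp (whisker ?U (Gen CupL) (Up # ?U)) ?cap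
        \<approx> Comp (whisker ?U (whisker [] (Gen CupL) [Up]) ?U)
               (whisker ?U (whisker [Up] (Gen CapL) []) ?U)"
      by (intro eqv.comp_cong whisker_whisker_rev) auto
    also have "\<dots> \<approx> Idt (?U @ Up # ?U)" using whisker_inverse[OF zigzag_L_Up, of ?U ?U] by simp
    finally show ?thesis .
  qed
  have "Comp ?cup (N.norm m [Up, Dn]) \<approx> Comp (Comp ?cup ?a) (Comp ?cap ?v)"
    by (intro eqv.trans[OF comp_cong_right[OF norm]] comp_assoc_rev) auto
  also have "\<dots> \<approx> Comp (Comp (whisker ?U V_in []) (whisker ?U (Gen CupL) (Up # ?U))) (Comp ?cap ?v)"
    by (intro comp_cong_left) (use whisker_interchange[of "Gen CupL" V_in ?U "[]"] in auto)
  also have "\<dots> \<approx> Comp (whisker ?U V_in []) (Comp (Comp (whisker ?U (Gen CupL) (Up # ?U)) ?cap) ?v)"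
    by (intro eqv.trans[OF eqv.comp_assoc] comp_cong_right comp_assoc_rev) auto
  also have "\<dots> \<approx> Comp (whisker ?U V_in []) ?v"
    by (intro comp_cong_right eqv.trans[OF comp_cong_left[OF zigzag]] comp_Idt_left) auto
  also have "\<dots> \<approx> Comp (whisker ?U V_in []) (whisker ?U V_out [])"
    by (intro comp_cong_right eqv.sym[OF whisker_VOut_ups]) auto
  also have "\<dots> \<approx> Idt ?U" using whisker_inverse[OF VIn_VOut, of ?U "[]"] by simp
  finally show ?thesis by simp
qed

lemma natural_CupR_N_bottom: "Comp (whisker [] (Gen CupR) []) (N.norm 0 [Dn, Up]) \<approx> N.norm 0 []"
proof -
  let ?a = "whisker [Dn] V_in [Up]" and ?cap = "whisker [] (Gen CapL) (Up # ups m)"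
  have "N.norm 0 [Dn, Up]
      \<approx> Comp (whisker [] (Comp (whisker [Dn] V_in []) (whisker [] (Gen CapL) (ups m))) [Up]) V_out"
    using N.norm_pair[of 0 Dn Up] by simp
  also have "\<dots> \<approx> Comp (Comp ?a ?cap) V_out"
    by (intro comp_cong_left eqv.trans[OF whisker_Comp] eqv.comp_cong whisker_whisker) auto
  finally have norm: "N.norm 0 [Dn, Up] \<approx> Comp (Comp ?a ?cap) V_out" .
  have "Comp (whisker [] (Gen CupR) []) (N.norm 0 [Dn, Up])
      \<approx> Comp (Gen CupR) (Comp (Comp ?a ?cap) V_out)"
    by (intro eqv.comp_cong whisker_Nil norm) auto
  also have "\<dots> \<approx> Comp (Comp (Comp (Gen CupR) ?a) ?cap) V_out"
    by (intro eqv.trans[OF comp_assoc_rev] comp_cong_left comp_assoc_rev) auto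
  also have "\<dots> \<approx> Comp V_in V_out" by (intro comp_cong_left VIn_rotation) auto
  also have "\<dots> \<approx> Idt []" by (rule VIn_VOut)
  finally show ?thesis by simp
qed

lemma natural_CupL_N:
  assumes k: "k \<le> m"
  shows "Comp (whisker (ups k) (Gen CupL) []) (N.norm k [Up, Dn]) \<approx> N.norm k []"
proof (cases "k = m")
  case True
  then show ?thesis using natural_CupL_N_top by simp
next
  case False
  have "N.norm k [Up, Dn]
      \<approx> Comp (whisker [] (Idt (ups k @ [Up])) [Dn]) (whisker (ups k) (Gen CapR) [])"
    using N.norm_pair[of k Up Dn] k False by simp
  also have "\<dots> \<approx> Comp (Idt (ups k @ [Up, Dn])) (whisker (ups k) (Gen CapR) [])"
    by (intro comp_cong_left) (use whisker_Idt[of "[]" "ups k @ [Up]" "[Dn]"] in auto)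
  also have "\<dots> \<approx> whisker (ups k) (Gen CapR) []" by (intro comp_Idt_left) auto
  finally have "Comp (whisker (ups k) (Gen CupL) []) (N.norm k [Up, Dn])
      \<approx> Comp (whisker (ups k) (Gen CupL) []) (whisker (ups k) (Gen CapR) [])"
    by (intro comp_cong_right) (use k in \<open>auto simp del: norm_dgm.simps\<close>)
  also have "\<dots> \<approx> Idt (ups k)" using whisker_inverse[OF circle_L, of "ups k" "[]"] by simp
  finally show ?thesis by simp
qed

lemma natural_CupR_N:
  assumes k: "k \<le> m"
  shows "Comp (whisker (ups k) (Gen CupR) []) (N.norm k [Dn, Up]) \<approx> N.norm k []"
proof (cases k)
  case 0
  then show ?thesis using natural_CupR_N_bottom by simp
next
  case (Suc j)
  have "N.norm k [Dn, Up]
      \<approx> Comp (whisker [] (whisker (ups j) (Gen CapR) []) [Up]) (Idt (ups j @ [Up]))"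
    using N.norm_pair[of k Dn Up] k Suc by simp
  also have "\<dots> \<approx> whisker [] (whisker (ups j) (Gen CapR) []) [Up]"
    by (intro comp_Idt_right) auto
  also have "\<dots> \<approx> whisker (ups j) (whisker [] (Gen CapR) [Up]) []"
    by (intro eqv.trans[OF whisker_whisker] whisker_whisker_rev) auto
  finally have "Comp (whisker (ups k) (Gen CupR) []) (N.norm k [Dn, Up])
      \<approx> Comp (whisker (ups j) (whisker [Up] (Gen CupR) []) [])
             (whisker (ups j) (whisker [] (Gen CapR) [Up]) [])"
    by (intro eqv.comp_cong whisker_whisker_rev) (use k Suc in \<open>auto simp del: norm_dgm.simps\<close>)
  also have "\<dots> \<approx> Idt (ups j @ [Up])" using whisker_inverse[OF zigzag_R_Up, of "ups j" "[]"] by simp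
  finally show ?thesis using Suc by simp
qed

lemma norm_N_ups: "k + j \<le> m \<Longrightarrow> N.norm k (ups j @ b) \<approx> N.norm (k + j) b"
proof (induction j arbitrary: k)
  case 0
  then show ?case by (simp add: eqv.refl)
next
  case (Suc j)
  have "N.norm k (ups (Suc j) @ b) = Comp (whisker [] (Idt (ups k @ [Up])) (ups j @ b))
                                          (N.norm (Suc k) (ups j @ b))"
    using Suc.prems by simp
  also have "\<dots> \<approx> Comp (Idt (ups k @ Up # ups j @ b)) (N.norm (Suc k) (ups j @ b))"
    using whisker_Idt[of "[]" "ups k @ [Up]" "ups j @ b"] Suc.prems by (intro comp_cong_left) auto
  also have "\<dots> \<approx> N.norm (Suc k) (ups j @ b)" by (intro comp_Idt_left) (use Suc.prems in auto)
  also have "\<dots> \<approx> N.norm (k + Suc j) b" using Suc.IH[of "Suc k"] Suc.prems by simp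
  finally show ?case .
qed

lemma natural_VOut_N:
  assumes k: "k \<le> m"
  shows "Comp (whisker (ups k) V_out []) (N.norm k []) \<approx> N.norm k (Up # ups m)"
proof -
  have "N.norm k (Up # ups m) = N.norm k (ups (m - k) @ Up # ups k)"
    using k by (simp add: replicate_add[symmetric])
  also have "\<dots> \<approx> N.norm m (Up # ups k)" using norm_N_ups[of k "m - k" "Up # ups k"] k by simp
  also have "\<dots> = Comp (whisker [] V_out (ups k)) (N.norm 0 (ups k))" by simp
  also have "\<dots> \<approx> Comp (whisker [] V_out (ups k)) (Idt (ups k))"
    by (intro comp_cong_right) (use norm_N_ups[of 0 k "[]"] k in auto)
  also have "\<dots> \<approx> whisker (ups k) V_out []"
    by (intro eqv.trans[OF comp_Idt_right] eqv.sym[OF whisker_VOut_ups]) auto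
  also have "\<dots> \<approx> Comp (whisker (ups k) V_out []) (Idt (ups k))"
    by (rule eqv.sym, rule comp_Idt_right) auto
  finally show ?thesis using eqv.sym by simp
qed

lemma natural_Gen_N:
  assumes k: "k \<le> m" and g: "g \<in> Bn_gens (Suc m)"
  shows "Comp (whisker (ups k) (Gen g) []) (N.norm k (gcod g)) \<approx> N.norm k (gdom g)"
proof -
  let ?natural = "\<lambda>g. Comp (whisker (ups k) (Gen g) []) (N.norm k (gcod g)) \<approx> N.norm k (gdom g)"
  have CupL: "?natural CupL" and CupR: "?natural CupR" and VOut: "?natural (VOut (Suc m))"
    using natural_CupL_N[OF k] natural_CupR_N[OF k] natural_VOut_N[OF k] by simp_all
  have CapR: "?natural CapR"
    by (rule N.natural_if_inverse[OF _ _ _ _ _ _ CupL]) (use k CapR_CupL in simp_all)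
  have CapL: "?natural CapL"
    by (rule N.natural_if_inverse[OF _ _ _ _ _ _ CupR]) (use k CapL_CupR in simp_all)
  have VIn: "?natural (VIn (Suc m))"
    by (rule N.natural_if_inverse[OF _ _ _ _ _ _ VOut]) (use k VIn_VOut in simp_all)
  from g consider "g = CupL" | "g = CupR" | "g = CapR" | "g = CapL"
    | "g = VOut (Suc m)" | "g = VIn (Suc m)"
    unfolding Bn_gens_def B_gens_def by blast
  then show ?thesis using CupL CupR CapR CapL VOut VIn by cases blast+
qed

end

lemma foldl_step_N_le: "k \<le> m \<Longrightarrow> foldl (step_N m) k u \<le> m"
  by (induction u arbitrary: k) (auto simp: step_N_le)

lemma step_N_eq_mod: "k \<le> m \<Longrightarrow> step_N m k x = (k + (if x = Up then 1 else m)) mod Suc m"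
proof (cases x)
  case Dn
  assume k: "k \<le> m"
  show ?thesis
  proof (cases k)
    case (Suc j)
    have "(k + m) mod Suc m = (j + Suc m) mod Suc m" using Suc by simp
    also have "\<dots> = j" using k Suc by (simp only: mod_add_self2) simp
    finally show ?thesis using Dn Suc by simp
  qed (use Dn in simp)
qed auto

lemma foldl_step_N_mod: "k \<le> m \<Longrightarrow> foldl (step_N m) k u = (k + foldl (step_N m) 0 u) mod Suc m"
proof (induction u arbitrary: k)
  case (Cons x u)
  let ?d = "if x = Up then 1 else m" and ?S = "foldl (step_N m) 0 u"
  have "foldl (step_N m) k (x # u) = ((k + ?d) mod Suc m + ?S) mod Suc m"
    using Cons.IH[OF step_N_le[OF Cons.prems]] step_N_eq_mod[OF Cons.prems] by simp
  also have "\<dots> = (k + (?d mod Suc m + ?S) mod Suc m) mod Suc m"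
    by (simp add: mod_add_left_eq mod_add_right_eq add.assoc)
  also have "\<dots> = (k + foldl (step_N m) 0 (x # u)) mod Suc m"
    using Cons.IH[OF step_N_le[of 0 m x]] step_N_eq_mod[of 0 m x] by simp
  finally show ?case .
qed simp

lemma foldl_step_N_ups: "k + j \<le> m \<Longrightarrow> foldl (step_N m) k (replicate j Up) = k + j"
  by (induction j arbitrary: k) auto

lemma Bn_rels_typed: "(s, t) \<in> Bn_rels n \<Longrightarrow>
    valid (Bn_gens n) s \<and> valid (Bn_gens n) t \<and> ddom s = ddom t \<and> dcod s = dcod t"
  by (auto simp: Bn_rels_def B_rels_def Bn_gens_def B_gens_def)

theorem Bn_equiv_integer_mod_group:
  assumes "0 < n"
  shows "monoidal_equiv_K (Bn_gens n) (Bn_rels n) (integer_mod_group n)"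
proof -
  obtain m where n: "n = Suc m" using assms gr0_implies_Suc by blast
  interpret Bn_presentation "Bn_gens n" "Bn_rels n" m
    by unfold_locales (erule Bn_rels_typed | auto simp: n Bn_gens_def Bn_rels_def)+
  interpret N: natural_normalisation "Bn_gens n" "Bn_rels n" "\<lambda>k. replicate k Up" "step_N m"
    "\<lambda>k. k \<le> m" 0 "move_N m" "move_back_N m"
    by unfold_locales (rule natural_Gen_N, simp_all add: n)
  show ?thesis
  proof (rule N.monoidal_equiv_K_if_classifying[where F = "\<lambda>u. int (foldl (step_N m) 0 u)"])
    show "int (foldl (step_N m) 0 u) \<in> carrier (integer_mod_group n)" for u
      using foldl_step_N_le[OF le0, of m u]
      by (simp add: n carrier_integer_mod_group del: N.is_state_foldl)
    show "\<And>u v. int (foldl (step_N m) 0 (u @ v))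
        = int (foldl (step_N m) 0 u) \<otimes>\<^bsub>integer_mod_group n\<^esub> int (foldl (step_N m) 0 v)"
      using foldl_step_N_mod[OF foldl_step_N_le[of 0 m]] by (simp add: n zmod_int)
    show "\<exists>u. int (foldl (step_N m) 0 u) = g" if "g \<in> carrier (integer_mod_group n)" for g
    proof
      have "0 \<le> g" "nat g \<le> m" using that by (auto simp: n carrier_integer_mod_group)
      then show "int (foldl (step_N m) 0 (replicate (nat g) Up)) = g"
        using foldl_step_N_ups[of 0 "nat g" m] by simp
    qed
  qed simp_all
qed

theorem theoremB1:
  shows "monoidal_equiv_K B_gens B_rels integer_group \<and>
         (\<forall>n::nat. n \<ge> 2 \<longrightarrow> monoidal_equiv_K (Bn_gens n) (Bn_rels n) (integer_mod_group n))"
  using B_equiv_integer_group Bn_equiv_integer_mod_group by simp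

end
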